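(* Let $A\subseteq B\subseteq C$ be convex sets in $\mathbb{R}^d$. Then: (i) $\operatorname{rdist}(A,B)=\inf\{\lambda\geq 0: B\subseteq(1+\lambda)A-\lambda A\}$; (ii) for any affine map $\pi:\mathbb{R}^d\to\mathbb{R}^m$, $\operatorname{rdist}(\pi(A),\pi(B))\leq\operatorname{rdist}(A,B)$, with equality if $m=d$ and $\pi$ is invertible; (iii) $\operatorname{rdist}(A,C)\leq\operatorname{rdist}(A,B)+\operatorname{rdist}(B,C)+2\operatorname{rdist}(A,B)\operatorname{rdist}(B,C)$; (iv) for convex sets $A_1,\dots,A_t,B_1,\dots,B_t\subseteq\mathbb{R}^d$ with $A_i\subseteq B_i$ for all $i\in[t]$, $\operatorname{rdist}\big(\operatorname{conv}(\bigcup_{i\in[t]}A_i),\operatorname{conv}(\bigcup_{i\in[t]}B_i)\big)\leq\max_{i\in[t]}\operatorname{rdist}(A_i,B_i)$.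
   Context: For nonempty convex sets $A\subseteq B\subseteq\mathbb{R}^d$, $\operatorname{rdist}(A,B)=\sup_{\pi}\frac{\sup_{b\in B}\inf_{a\in A}|\pi(b)-\pi(a)|}{\sup_{a,a'\in A}|\pi(a)-\pi(a')|}$, the supremum over all linear maps $\pi:\mathbb{R}^d\to\mathbb{R}$, where a fraction with denominator $\infty$ and the fraction $0/0$ are interpreted as $0$; moreover $\operatorname{rdist}(\emptyset,\emptyset)=0$ and $\operatorname{rdist}(\emptyset,B)=\infty$ for $B\neq\emptyset$. For sets $X,Y$ and scalars $\alpha,\beta$, $\alpha X-\beta Y=\{\alpha x-\beta y: x\in X, y\in Y\}$. *)

theory Defs
  imports "HOL-Analysis.Analysis" "HOL-Library.Extended_Real"
begin

definition rfrac :: "ereal \<Rightarrow> ereal \<Rightarrow> ereal" where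
  "rfrac N D = (if D = \<infinity> then 0 else if D = 0 then (if N = 0 then 0 else \<infinity>) else N / D)"

definition rdist :: "'a::euclidean_space set \<Rightarrow> 'a set \<Rightarrow> ereal" where
  "rdist A B =
     (if A = {} then (if B = {} then 0 else \<infinity>)
      else (SUP \<pi>\<in>{\<pi>::'a \<Rightarrow> real. linear \<pi>}.
              rfrac (SUP b\<in>B. INF a\<in>A. ereal \<bar>\<pi> b - \<pi> a\<bar>)
                    (SUP p\<in>A \<times> A. ereal \<bar>\<pi> (fst p) - \<pi> (snd p)\<bar>)))"

definition scaled_diff :: "real \<Rightarrow> 'a::real_vector set \<Rightarrow> real \<Rightarrow> 'a set \<Rightarrow> 'a set" where
  "scaled_diff \<alpha> X \<beta> Y = {\<alpha> *\<^sub>R x - \<beta> *\<^sub>R y | x y. x \<in> X \<and> y \<in> Y}"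

definition affine_map :: "('a::real_vector \<Rightarrow> 'b::real_vector) \<Rightarrow> bool" where
  "affine_map \<pi> \<longleftrightarrow> (\<exists>f c. linear f \<and> \<pi> = (\<lambda>x. f x + c))"

end

theory Submission
  imports Defs
begin

(*
  Everything rests on (i): for convex A, rdist A B < l forces B \<subseteq> (1 + l) A - l A, and
  conversely. If a point of B lay outside the closure of (1 + l) A - l A, a separating
  linear functional would see it more than l widths of A away from A; the closure is then
  removed by giving up an arbitrarily small amount of l, a ball around a relative interior
  point of A absorbing the approximation error. Statement (ii) holds because functionals on
  the image pull back along the linear part of the map. For (iii), the construction with l\<^sub>1
  followed by the one with l\<^sub>2 stays inside the one with l\<^sub>1 + l\<^sub>2 + 2 l\<^sub>1 l\<^sub>2; for (iv),
  (1 + l) H - l H is convex for the hull H of the A\<^sub>i and contains every B\<^sub>i, hence their hull.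
*)

lemma rfrac_le_ereal:
  fixes N D :: ereal
  assumes "0 \<le> N" "0 \<le> D" "0 \<le> l" "N \<le> ereal l * D"
  shows "rfrac N D \<le> ereal l"
  using assms by (cases D; cases N) (auto simp: rfrac_def field_simps)

lemma ereal_le_rfrac:
  fixes N D :: ereal
  assumes "0 \<le> D" "D \<noteq> \<infinity>" "0 \<le> l" "ereal l * D < N"
  shows "ereal l \<le> rfrac N D"
  using assms by (cases D; cases N) (auto simp: rfrac_def field_simps)

lemma ereal_le_if_le_real_above:
  fixes x y :: ereal
  assumes "\<And>l. y < ereal l \<Longrightarrow> x \<le> ereal l"
  shows "x \<le> y"
proof (rule dense_ge)
  fix z assume "y < z"
  then obtain l where "y < ereal l" "ereal l < z" using ereal_dense2 by blast
  then show "x \<le> z" using assms by (meson order.trans less_imp_le)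
qed

definition rdist_along :: "('a \<Rightarrow> real) \<Rightarrow> 'a set \<Rightarrow> 'a set \<Rightarrow> ereal" where
  "rdist_along \<pi> A B =
     rfrac (SUP b\<in>B. INF a\<in>A. ereal \<bar>\<pi> b - \<pi> a\<bar>)
           (SUP p\<in>A \<times> A. ereal \<bar>\<pi> (fst p) - \<pi> (snd p)\<bar>)"

lemma rdist_eq_SUP_rdist_along:
  "A \<noteq> {} \<Longrightarrow> rdist A B = (SUP \<pi>\<in>{\<pi>. linear \<pi>}. rdist_along \<pi> A B)"
  by (simp add: rdist_def rdist_along_def)

lemma rdist_along_le_rdist: "A \<noteq> {} \<Longrightarrow> linear \<pi> \<Longrightarrow> rdist_along \<pi> A B \<le> rdist A B"
  by (auto simp: rdist_eq_SUP_rdist_along intro: SUP_upper)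

lemma rdist_le_if_rdist_along_le:
  "A \<noteq> {} \<Longrightarrow> (\<And>\<pi>. linear \<pi> \<Longrightarrow> rdist_along \<pi> A B \<le> x) \<Longrightarrow> rdist A B \<le> x"
  by (auto simp: rdist_eq_SUP_rdist_along intro: SUP_least)

lemma rdist_nonneg: "0 \<le> rdist A B"
proof (cases "A = {}")
  case False
  have "0 \<le> rdist_along (\<lambda>_. 0) A B"
    using False by (cases "B = {}") (simp_all add: rdist_along_def rfrac_def)
  then show ?thesis
    using rdist_along_le_rdist[OF False linear_zero] by (rule order.trans)
qed (simp add: rdist_def)

lemma rdist_less_ereal_imp_pos: "rdist A B < ereal l \<Longrightarrow> 0 < l"
  using rdist_nonneg[of A B] by (metis ereal_less(2) order.strict_trans1)

lemma rdist_along_image: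
  "rdist_along \<phi> (g ` A) (g ` B) = rdist_along (\<phi> \<circ> g) A B"
proof -
  have "g ` A \<times> g ` A = (\<lambda>p. (g (fst p), g (snd p))) ` (A \<times> A)" by force
  then show ?thesis by (simp add: rdist_along_def image_image)
qed

lemma rdist_along_add_const: "rdist_along (\<lambda>x. \<pi> x + c) A B = rdist_along \<pi> A B"
  by (simp add: rdist_along_def)

lemma SUP_abs_diff_nonneg:
  assumes "A \<noteq> {}"
  shows "0 \<le> (SUP p\<in>A \<times> A. ereal \<bar>\<pi> (fst p) - \<pi> (snd p)\<bar>)"
proof -
  obtain a where "a \<in> A" using assms by auto
  then have "ereal \<bar>\<pi> (fst (a, a)) - \<pi> (snd (a, a))\<bar> \<le> (SUP p\<in>A \<times> A. ereal \<bar>\<pi> (fst p) - \<pi> (snd p)\<bar>)"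
    by (intro SUP_upper) auto
  then show ?thesis by (simp add: zero_ereal_def)
qed

lemma SUP_INF_abs_diff_nonneg:
  assumes "B \<noteq> {}"
  shows "0 \<le> (SUP b\<in>B. INF a\<in>A. ereal \<bar>\<pi> b - \<pi> a\<bar>)"
proof -
  obtain b where "b \<in> B" using assms by auto
  have "0 \<le> (INF a\<in>A. ereal \<bar>\<pi> b - \<pi> a\<bar>)" by (intro INF_greatest) auto
  also have "\<dots> \<le> (SUP b\<in>B. INF a\<in>A. ereal \<bar>\<pi> b - \<pi> a\<bar>)" using \<open>b \<in> B\<close> by (rule SUP_upper)
  finally show ?thesis .
qed

lemma mem_scaled_diff_iff:
  "z \<in> scaled_diff \<alpha> X \<beta> Y \<longleftrightarrow> (\<exists>x\<in>X. \<exists>y\<in>Y. z = \<alpha> *\<^sub>R x - \<beta> *\<^sub>R y)"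
  unfolding scaled_diff_def by blast

lemma scaled_diff_mono: "X \<subseteq> Y \<Longrightarrow> scaled_diff \<alpha> X \<beta> X \<subseteq> scaled_diff \<alpha> Y \<beta> Y"
  unfolding scaled_diff_def by blast

lemma convex_scaled_diff:
  assumes "convex X" "convex Y"
  shows "convex (scaled_diff \<alpha> X \<beta> Y)"
proof -
  have "scaled_diff \<alpha> X \<beta> Y = (\<Union>x\<in>(*\<^sub>R) \<alpha> ` X. \<Union>y\<in>(*\<^sub>R) (- \<beta>) ` Y. {x + y})"
    (is "_ = ?S") by (auto simp: scaled_diff_def)
  moreover have "convex ?S" by (intro convex_sums convex_scaling assms)
  ultimately show ?thesis by simp
qed

lemma scaled_diff_subset_affine_hull:
  "scaled_diff (1 + l) A l A \<subseteq> affine hull A"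
proof
  fix z assume "z \<in> scaled_diff (1 + l) A l A"
  then obtain x y where xy: "x \<in> A" "y \<in> A" "z = (1 + l) *\<^sub>R x - l *\<^sub>R y"
    by (auto simp: scaled_diff_def)
  have "(1 + l) *\<^sub>R x + (- l) *\<^sub>R y \<in> affine hull A"
    using xy by (intro mem_affine[OF affine_affine_hull]) (auto intro: hull_inc)
  then show "z \<in> affine hull A" using xy by simp
qed

text \<open>The coefficients compose like \<open>1 + 2 l = (1 + 2 l\<^sub>1) (1 + 2 l\<^sub>2)\<close>.\<close>
lemma scaled_diff_trans:
  fixes A :: "'a::real_vector set"
  assumes "convex A" "0 \<le> l\<^sub>1" "0 \<le> l\<^sub>2"
    and "B \<subseteq> scaled_diff (1 + l\<^sub>1) A l\<^sub>1 A" "C \<subseteq> scaled_diff (1 + l\<^sub>2) B l\<^sub>2 B"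
  defines "l \<equiv> l\<^sub>1 + l\<^sub>2 + 2 * l\<^sub>1 * l\<^sub>2"
  shows "C \<subseteq> scaled_diff (1 + l) A l A"
proof
  fix z assume "z \<in> C"
  then obtain b b' where b: "b \<in> B" "b' \<in> B" "z = (1 + l\<^sub>2) *\<^sub>R b - l\<^sub>2 *\<^sub>R b'"
    using assms(5) by (auto simp: scaled_diff_def)
  obtain a a' where a: "a \<in> A" "a' \<in> A" "b = (1 + l\<^sub>1) *\<^sub>R a - l\<^sub>1 *\<^sub>R a'"
    using assms(4) b(1) by (auto simp: scaled_diff_def)
  obtain c c' where c: "c \<in> A" "c' \<in> A" "b' = (1 + l\<^sub>1) *\<^sub>R c - l\<^sub>1 *\<^sub>R c'"
    using assms(4) b(2) by (auto simp: scaled_diff_def)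
  have z: "z = ((1 + l\<^sub>1) * (1 + l\<^sub>2)) *\<^sub>R a + (l\<^sub>1 * l\<^sub>2) *\<^sub>R c'
      - (((1 + l\<^sub>2) * l\<^sub>1) *\<^sub>R a' + (l\<^sub>2 * (1 + l\<^sub>1)) *\<^sub>R c)"
    unfolding b(3) a(3) c(3) by (simp add: algebra_simps)
  show "z \<in> scaled_diff (1 + l) A l A"
  proof (cases "l = 0")
    case True
    then have "l\<^sub>1 = 0" "l\<^sub>2 = 0" using assms(2,3) unfolding l_def
      by (smt (verit) mult_nonneg_nonneg)+
    then show ?thesis using z True a by (auto simp: mem_scaled_diff_iff)
  next
    case False
    then have l: "0 < l" using assms(2,3) unfolding l_def
      by (smt (verit) mult_nonneg_nonneg)
    define x where "x = (((1 + l\<^sub>1) * (1 + l\<^sub>2)) / (1 + l)) *\<^sub>R a + ((l\<^sub>1 * l\<^sub>2) / (1 + l)) *\<^sub>R c'"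
    define y where "y = (((1 + l\<^sub>2) * l\<^sub>1) / l) *\<^sub>R a' + ((l\<^sub>2 * (1 + l\<^sub>1)) / l) *\<^sub>R c"
    have "((1 + l\<^sub>1) * (1 + l\<^sub>2)) / (1 + l) + (l\<^sub>1 * l\<^sub>2) / (1 + l) = 1"
      using l unfolding l_def by (simp add: divide_simps) (simp add: algebra_simps)
    then have "x \<in> A" unfolding x_def
      by (intro convexD[OF assms(1) a(1) c(2)]) (use assms(2,3) l in auto)
    moreover have "((1 + l\<^sub>2) * l\<^sub>1) / l + (l\<^sub>2 * (1 + l\<^sub>1)) / l = 1"
      using l unfolding l_def by (simp add: divide_simps) (simp add: algebra_simps)
    then have "y \<in> A" unfolding y_def
      by (intro convexD[OF assms(1) a(2) c(1)]) (use assms(2,3) l in auto)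
    moreover have "z = (1 + l) *\<^sub>R x - l *\<^sub>R y"
      unfolding z x_def y_def using l by (simp add: scaleR_add_right)
    ultimately show ?thesis unfolding mem_scaled_diff_iff by blast
  qed
qed

lemma scaled_diff_perturb:
  fixes A :: "'a::real_vector set"
  assumes "convex A" "p \<in> A" "q \<in> A" "w \<in> A" "c \<in> A" "0 \<le> l'" "l' < l"
  shows "(1 + l') *\<^sub>R p - l' *\<^sub>R q + (l - l') *\<^sub>R (w - c) \<in> scaled_diff (1 + l) A l A"
proof -
  have l: "0 < l" using assms by simp
  define a where "a = ((1 + l') / (1 + l)) *\<^sub>R p + ((l - l') / (1 + l)) *\<^sub>R w"
  define a' where "a' = (l' / l) *\<^sub>R q + ((l - l') / l) *\<^sub>R c"
  have "a \<in> A" unfolding a_def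
    by (rule convexD[OF assms(1,2,4)]) (use assms in \<open>auto simp: divide_simps\<close>)
  moreover have "a' \<in> A" unfolding a'_def
    by (rule convexD[OF assms(1,3,5)]) (use assms in \<open>auto simp: field_simps\<close>)
  moreover have "(1 + l) *\<^sub>R a = (1 + l') *\<^sub>R p + (l - l') *\<^sub>R w"
    unfolding a_def using l by (simp add: scaleR_add_right)
  moreover have "l *\<^sub>R a' = l' *\<^sub>R q + (l - l') *\<^sub>R c"
    unfolding a'_def using l by (simp add: scaleR_add_right)
  ultimately show ?thesis unfolding mem_scaled_diff_iff
    by (metis (no_types, lifting) add_diff_add scaleR_right_diff_distrib)
qed

lemma rdist_le_if_subset_scaled_diff:
  assumes "A \<subseteq> B" "0 \<le> l" "B \<subseteq> scaled_diff (1 + l) A l A"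
  shows "rdist A B \<le> ereal l"
proof (cases "A = {}")
  case True
  then show ?thesis using assms by (simp add: rdist_def scaled_diff_def)
next
  case False
  show ?thesis
  proof (rule rdist_le_if_rdist_along_le[OF False])
    fix \<pi> :: "'a \<Rightarrow> real" assume lin: "linear \<pi>"
    let ?D = "SUP p\<in>A \<times> A. ereal \<bar>\<pi> (fst p) - \<pi> (snd p)\<bar>"
    have "(SUP b\<in>B. INF a\<in>A. ereal \<bar>\<pi> b - \<pi> a\<bar>) \<le> ereal l * ?D"
    proof (rule SUP_least)
      fix b assume "b \<in> B"
      then obtain x y where xy: "x \<in> A" "y \<in> A" "b = (1 + l) *\<^sub>R x - l *\<^sub>R y"
        using assms(3) by (auto simp: scaled_diff_def)
      have "\<pi> b = (1 + l) * \<pi> x - l * \<pi> y"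
        unfolding xy(3) by (simp add: linear_diff[OF lin] linear_scale[OF lin])
      then have "\<pi> b - \<pi> x = l * (\<pi> x - \<pi> y)" by (simp add: algebra_simps)
      then have "\<bar>\<pi> b - \<pi> x\<bar> = l * \<bar>\<pi> (fst (x, y)) - \<pi> (snd (x, y))\<bar>"
        using assms(2) by (simp add: abs_mult)
      then have "(INF a\<in>A. ereal \<bar>\<pi> b - \<pi> a\<bar>) \<le> ereal l * ereal \<bar>\<pi> (fst (x, y)) - \<pi> (snd (x, y))\<bar>"
        using xy by (intro INF_lower2[of x]) auto
      also have "\<dots> \<le> ereal l * ?D"
        using xy assms(2) by (intro ereal_mult_left_mono SUP_upper) auto
      finally show "(INF a\<in>A. ereal \<bar>\<pi> b - \<pi> a\<bar>) \<le> ereal l * ?D" .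
    qed
    then show "rdist_along \<pi> A B \<le> ereal l"
      unfolding rdist_along_def using False assms(1,2)
      by (intro rfrac_le_ereal SUP_abs_diff_nonneg SUP_INF_abs_diff_nonneg) auto
  qed
qed

lemma ereal_le_rdist_along_if_gap:
  fixes f :: "'a \<Rightarrow> real"
  assumes "A \<noteq> {}" "bdd_above (f ` A)" "bdd_below (f ` A)" "z \<in> B" "0 \<le> l"
    and gap: "l * (Sup (f ` A) - Inf (f ` A)) < Inf (f ` A) - f z"
  shows "ereal l \<le> rdist_along f A B"
proof -
  let ?N = "SUP b\<in>B. INF a\<in>A. ereal \<bar>f b - f a\<bar>"
  let ?D = "SUP p\<in>A \<times> A. ereal \<bar>f (fst p) - f (snd p)\<bar>"
  have D: "?D \<le> ereal (Sup (f ` A) - Inf (f ` A))"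
  proof (rule SUP_least)
    fix p assume "p \<in> A \<times> A"
    then have "f (fst p) \<le> Sup (f ` A) \<and> f (snd p) \<le> Sup (f ` A) \<and>
               Inf (f ` A) \<le> f (fst p) \<and> Inf (f ` A) \<le> f (snd p)"
      using assms(2,3) by (auto intro: cSUP_upper cINF_lower)
    then show "ereal \<bar>f (fst p) - f (snd p)\<bar> \<le> ereal (Sup (f ` A) - Inf (f ` A))" by auto
  qed
  have "ereal (Inf (f ` A) - f z) \<le> (INF a\<in>A. ereal \<bar>f z - f a\<bar>)"
    using assms(3) by (intro INF_greatest) (auto dest: cINF_lower)
  also have "\<dots> \<le> ?N" using assms(4) by (rule SUP_upper)
  finally have N: "ereal (Inf (f ` A) - f z) \<le> ?N" .
  have "ereal l * ?D \<le> ereal (l * (Sup (f ` A) - Inf (f ` A)))"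
    using D assms(5) by (simp add: ereal_mult_left_mono flip: times_ereal.simps)
  also have "\<dots> < ?N" by (rule order.strict_trans2[OF _ N]) (simp add: gap)
  finally show ?thesis
    unfolding rdist_along_def using D assms(1,5)
    by (intro ereal_le_rfrac SUP_abs_diff_nonneg) auto
qed

lemma bounds_if_affine_combination_above:
  fixes f :: "'a \<Rightarrow> real"
  assumes "A \<noteq> {}" "0 < l" "\<And>x y. x \<in> A \<Longrightarrow> y \<in> A \<Longrightarrow> \<beta> < (1 + l) * f x - l * f y"
  shows "bdd_above (f ` A)" "bdd_below (f ` A)" "\<beta> + l * Sup (f ` A) \<le> (1 + l) * Inf (f ` A)"
proof -
  obtain a\<^sub>0 where a\<^sub>0: "a\<^sub>0 \<in> A" using assms(1) by auto
  have "f y \<le> ((1 + l) * f a\<^sub>0 - \<beta>) / l" if "y \<in> A" for y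
    using assms(3)[OF a\<^sub>0 that] assms(2) by (simp add: field_simps)
  then show "bdd_above (f ` A)" by (intro bdd_aboveI2)
  have "(\<beta> + l * f a\<^sub>0) / (1 + l) \<le> f x" if "x \<in> A" for x
    using assms(3)[OF that a\<^sub>0] assms(2) by (simp add: field_simps)
  then show "bdd_below (f ` A)" by (intro bdd_belowI2)
  have "\<beta> + l * Sup (f ` A) \<le> (1 + l) * f x" if "x \<in> A" for x
  proof -
    have "f y \<le> ((1 + l) * f x - \<beta>) / l" if "y \<in> A" for y
      using assms(3)[OF \<open>x \<in> A\<close> that] assms(2) by (simp add: pos_le_divide_eq algebra_simps)
    then have "Sup (f ` A) \<le> ((1 + l) * f x - \<beta>) / l"
      using assms(1) by (intro cSUP_least) auto
    then show ?thesis using assms(2) by (simp add: pos_le_divide_eq algebra_simps)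
  qed
  then have "(\<beta> + l * Sup (f ` A)) / (1 + l) \<le> Inf (f ` A)"
    using assms(1,2) by (intro cINF_greatest) (auto simp: pos_divide_le_eq algebra_simps)
  then show "\<beta> + l * Sup (f ` A) \<le> (1 + l) * Inf (f ` A)"
    using assms(2) by (simp add: pos_divide_le_eq algebra_simps)
qed

lemma subset_closure_scaled_diff_if_rdist_less:
  fixes A B :: "'a::euclidean_space set"
  assumes "convex A" "A \<noteq> {}" "rdist A B < ereal l" "0 < l"
  shows "B \<subseteq> closure (scaled_diff (1 + l) A l A)"
proof
  fix z assume z: "z \<in> B"
  let ?K = "closure (scaled_diff (1 + l) A l A)"
  show "z \<in> ?K"
  proof (rule ccontr)
    assume "z \<notin> ?K"
    moreover have "convex ?K" by (intro convex_closure convex_scaled_diff assms(1))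
    ultimately obtain a \<beta> where sep: "inner a z < \<beta>" "\<forall>x\<in>?K. \<beta> < inner a x"
      using separating_hyperplane_closed_point[OF _ closed_closure] by blast
    define f where "f = inner a"
    have lin: "linear f" unfolding f_def by (simp add: linear_iff inner_add_right)
    have above: "\<beta> < (1 + l) * f x - l * f y" if "x \<in> A" "y \<in> A" for x y
    proof -
      have "(1 + l) *\<^sub>R x - l *\<^sub>R y \<in> scaled_diff (1 + l) A l A"
        using that unfolding mem_scaled_diff_iff by blast
      then have "(1 + l) *\<^sub>R x - l *\<^sub>R y \<in> ?K" using closure_subset by blast
      then show ?thesis using sep(2) unfolding f_def by (auto simp: inner_diff_right)
    qed
    have bdd: "bdd_above (f ` A)" "bdd_below (f ` A)"
      and "\<beta> + l * Sup (f ` A) \<le> (1 + l) * Inf (f ` A)"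
      by (rule bounds_if_affine_combination_above[OF assms(2,4) above]; assumption)+
    then have "l * (Sup (f ` A) - Inf (f ` A)) < Inf (f ` A) - f z"
      using sep(1) unfolding f_def by (simp add: algebra_simps)
    then have "ereal l \<le> rdist_along f A B"
      using assms(2,4) bdd z by (intro ereal_le_rdist_along_if_gap) auto
    also have "\<dots> \<le> rdist A B" by (rule rdist_along_le_rdist[OF assms(2) lin])
    finally show False using assms(3) by simp
  qed
qed

text \<open>The slack \<open>l - l'\<close> pays for moving a nearby point of the smaller set onto \<open>z\<close>, the
  displacement being taken up by a ball around a relative interior point \<open>c\<close>.\<close>
lemma closure_scaled_diff_subset:
  fixes A :: "'a::euclidean_space set"
  assumes "convex A" "0 \<le> l'" "l' < l"
  shows "closure (scaled_diff (1 + l') A l' A) \<subseteq> scaled_diff (1 + l) A l A"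
proof
  fix z assume z: "z \<in> closure (scaled_diff (1 + l') A l' A)"
  then have "A \<noteq> {}" by (auto simp: scaled_diff_def)
  then obtain c e where c: "c \<in> A" "0 < e" "ball c e \<inter> affine hull A \<subseteq> A"
    using rel_interior_eq_empty[OF assms(1)] by (auto simp: mem_rel_interior_ball)
  have "z \<in> affine hull A"
    using closure_minimal[OF scaled_diff_subset_affine_hull closed_affine_hull] z by blast
  obtain k where k: "k \<in> scaled_diff (1 + l') A l' A" "dist z k < (l - l') * e"
    using closure_approachableD[OF z, of "(l - l') * e"] assms(3) c(2) by auto
  then obtain p q where pq: "p \<in> A" "q \<in> A" "k = (1 + l') *\<^sub>R p - l' *\<^sub>R q"
    by (auto simp: scaled_diff_def)
  define w where "w = c + (1 / (l - l')) *\<^sub>R (z - k)"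
  have "w \<in> affine hull A" unfolding w_def
    using \<open>z \<in> affine hull A\<close> k(1) c(1) scaled_diff_subset_affine_hull
    by (intro mem_affine_3_minus[OF affine_affine_hull]) (auto intro: hull_inc)
  moreover have "dist c w = dist z k / (l - l')"
    using assms(3) by (simp add: w_def dist_norm norm_minus_commute)
  then have "dist c w < e"
    using k(2) assms(3) by (simp add: pos_divide_less_eq mult.commute)
  ultimately have "w \<in> A" using c(3) by auto
  have "z = (1 + l') *\<^sub>R p - l' *\<^sub>R q + (l - l') *\<^sub>R (w - c)"
    using assms(3) by (simp add: w_def pq(3))
  then show "z \<in> scaled_diff (1 + l) A l A"
    using scaled_diff_perturb[OF assms(1) pq(1,2) \<open>w \<in> A\<close> c(1) assms(2,3)] by simp
qed

lemma subset_scaled_diff_if_rdist_less: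
  fixes A B :: "'a::euclidean_space set"
  assumes "convex A" "rdist A B < ereal l"
  shows "B \<subseteq> scaled_diff (1 + l) A l A"
proof (cases "A = {}")
  case True
  then have "B = {}" using assms(2) by (auto simp: rdist_def split: if_splits)
  then show ?thesis by simp
next
  case False
  obtain l' where l': "rdist A B < ereal l'" "ereal l' < ereal l"
    using ereal_dense2[OF assms(2)] by blast
  have "0 < l'" using l'(1) by (rule rdist_less_ereal_imp_pos)
  have "B \<subseteq> closure (scaled_diff (1 + l') A l' A)"
    by (rule subset_closure_scaled_diff_if_rdist_less[OF assms(1) False l'(1) \<open>0 < l'\<close>])
  also have "\<dots> \<subseteq> scaled_diff (1 + l) A l A"
    using \<open>0 < l'\<close> l'(2) by (intro closure_scaled_diff_subset assms(1)) auto
  finally show ?thesis .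
qed

lemma rdist_eq_Inf_scaled_diff:
  fixes A B :: "'a::euclidean_space set"
  assumes "convex A" "A \<subseteq> B"
  shows "rdist A B = Inf (ereal ` {l. 0 \<le> l \<and> B \<subseteq> scaled_diff (1 + l) A l A})"
proof (rule antisym)
  show "rdist A B \<le> Inf (ereal ` {l. 0 \<le> l \<and> B \<subseteq> scaled_diff (1 + l) A l A})"
    using assms(2) by (auto intro!: Inf_greatest rdist_le_if_subset_scaled_diff)
  show "Inf (ereal ` {l. 0 \<le> l \<and> B \<subseteq> scaled_diff (1 + l) A l A}) \<le> rdist A B"
  proof (rule ereal_le_if_le_real_above)
    fix l assume l: "rdist A B < ereal l"
    then have "0 \<le> l" using rdist_less_ereal_imp_pos by fastforce
    with subset_scaled_diff_if_rdist_less[OF assms(1) l]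
    show "Inf (ereal ` {l. 0 \<le> l \<and> B \<subseteq> scaled_diff (1 + l) A l A}) \<le> ereal l"
      by (intro Inf_lower) auto
  qed
qed

lemma rdist_affine_image_le:
  fixes \<pi> :: "'a::euclidean_space \<Rightarrow> 'b::euclidean_space"
  assumes "affine_map \<pi>"
  shows "rdist (\<pi> ` A) (\<pi> ` B) \<le> rdist A B"
proof (cases "A = {}")
  case True
  then show ?thesis by (simp add: rdist_def)
next
  case False
  obtain f c where f: "linear f" and \<pi>: "\<pi> = (\<lambda>x. f x + c)"
    using assms by (auto simp: affine_map_def)
  show ?thesis
  proof (rule rdist_le_if_rdist_along_le)
    show "\<pi> ` A \<noteq> {}" using False by simp
    fix \<phi> :: "'b \<Rightarrow> real" assume \<phi>: "linear \<phi>"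
    have "\<phi> \<circ> \<pi> = (\<lambda>x. (\<phi> \<circ> f) x + \<phi> c)" using \<phi> by (simp add: \<pi> linear_add fun_eq_iff)
    then have "rdist_along \<phi> (\<pi> ` A) (\<pi> ` B) = rdist_along (\<phi> \<circ> f) A B"
      by (simp only: rdist_along_image rdist_along_add_const)
    also have "\<dots> \<le> rdist A B" by (rule rdist_along_le_rdist[OF False linear_compose[OF f \<phi>]])
    finally show "rdist_along \<phi> (\<pi> ` A) (\<pi> ` B) \<le> rdist A B" .
  qed
qed

lemma affine_map_bij_inverse:
  assumes "affine_map \<pi>" "bij \<pi>"
  obtains \<rho> where "affine_map \<rho>" "\<And>x. \<rho> (\<pi> x) = x"
proof -
  obtain f c where f: "linear f" and \<pi>: "\<pi> = (\<lambda>x. f x + c)"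
    using assms(1) by (auto simp: affine_map_def)
  have "inj f" using assms(2) by (auto simp: \<pi> bij_def inj_def)
  then obtain g where g: "linear g" "g \<circ> f = id" using linear_injective_left_inverse[OF f] by blast
  show ?thesis
  proof
    show "affine_map (\<lambda>y. g y + - g c)" unfolding affine_map_def using g(1) by blast
    show "g (\<pi> x) + - g c = x" for x
      using g by (simp add: \<pi> linear_add pointfree_idE)
  qed
qed

lemma rdist_affine_image_eq:
  fixes \<pi> :: "'a::euclidean_space \<Rightarrow> 'b::euclidean_space"
  assumes "affine_map \<pi>" "bij \<pi>"
  shows "rdist (\<pi> ` A) (\<pi> ` B) = rdist A B"
proof (rule antisym)
  show "rdist (\<pi> ` A) (\<pi> ` B) \<le> rdist A B" by (rule rdist_affine_image_le[OF assms(1)])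
  obtain \<rho> where \<rho>: "affine_map \<rho>" "\<And>x. \<rho> (\<pi> x) = x"
    using affine_map_bij_inverse[OF assms] by blast
  have "\<rho> ` \<pi> ` A = A" "\<rho> ` \<pi> ` B = B" by (simp_all add: image_image \<rho>(2))
  then show "rdist A B \<le> rdist (\<pi> ` A) (\<pi> ` B)"
    using rdist_affine_image_le[OF \<rho>(1), of "\<pi> ` A" "\<pi> ` B"] by simp
qed

lemma rdist_trans_bound:
  fixes A B C :: "'a::euclidean_space set"
  assumes "convex A" "convex B" "A \<subseteq> B" "B \<subseteq> C"
    and l\<^sub>1: "rdist A B < ereal l\<^sub>1" and l\<^sub>2: "rdist B C < ereal l\<^sub>2"
  shows "rdist A C \<le> ereal (l\<^sub>1 + l\<^sub>2 + 2 * l\<^sub>1 * l\<^sub>2)"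
proof -
  have "0 \<le> l\<^sub>1" "0 \<le> l\<^sub>2"
    using rdist_less_ereal_imp_pos[OF l\<^sub>1] rdist_less_ereal_imp_pos[OF l\<^sub>2] by simp_all
  then have "C \<subseteq> scaled_diff (1 + (l\<^sub>1 + l\<^sub>2 + 2 * l\<^sub>1 * l\<^sub>2)) A (l\<^sub>1 + l\<^sub>2 + 2 * l\<^sub>1 * l\<^sub>2) A"
    using subset_scaled_diff_if_rdist_less[OF assms(1) l\<^sub>1] subset_scaled_diff_if_rdist_less[OF assms(2) l\<^sub>2]
    by (intro scaled_diff_trans[OF assms(1)])
  then show ?thesis
    using assms(3,4) \<open>0 \<le> l\<^sub>1\<close> \<open>0 \<le> l\<^sub>2\<close> by (intro rdist_le_if_subset_scaled_diff) auto
qed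

lemma rdist_triangle:
  fixes A B C :: "'a::euclidean_space set"
  assumes "convex A" "convex B" "A \<subseteq> B" "B \<subseteq> C"
  shows "rdist A C \<le> rdist A B + rdist B C + 2 * rdist A B * rdist B C"
proof -
  show ?thesis
  proof (cases "rdist A B = \<infinity> \<or> rdist B C = \<infinity>")
    case True
    then show ?thesis using rdist_nonneg[of A B] rdist_nonneg[of B C]
      by (cases "rdist A B"; cases "rdist B C") auto
  next
    case False
    then obtain a b where ab: "rdist A B = ereal a" "rdist B C = ereal b"
      using rdist_nonneg[of A B] rdist_nonneg[of B C] by (cases "rdist A B"; cases "rdist B C") auto
    define g where "g d = ereal ((a + d) + (b + d) + 2 * (a + d) * (b + d))" for d
    have "(g \<longlongrightarrow> ereal (a + b + 2 * a * b)) (at_right 0)"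
    proof -
      have "((\<lambda>d. (a + d) + (b + d) + 2 * (a + d) * (b + d))
              \<longlongrightarrow> (a + 0) + (b + 0) + 2 * (a + 0) * (b + 0)) (at_right 0)"
        by (intro tendsto_intros)
      then show ?thesis unfolding g_def by (intro tendsto_ereal) simp
    qed
    moreover have "\<forall>\<^sub>F d in at_right 0. rdist A C \<le> g d"
      using eventually_at_right_less
    proof (rule eventually_mono)
      fix d :: real assume "0 < d"
      then show "rdist A C \<le> g d" unfolding g_def by (intro rdist_trans_bound[OF assms]) (simp_all add: ab)
    qed
    ultimately have "rdist A C \<le> ereal (a + b + 2 * a * b)"
      by (rule tendsto_le[OF trivial_limit_at_right_real _ tendsto_const])
    then show ?thesis by (simp add: ab)
  qed
qed

lemma rdist_convex_hull_UN_le: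
  fixes As Bs :: "'i \<Rightarrow> 'a::euclidean_space set"
  assumes "I \<noteq> {}" "\<And>i. i \<in> I \<Longrightarrow> convex (As i)" "\<And>i. i \<in> I \<Longrightarrow> As i \<subseteq> Bs i"
    and "\<And>i. i \<in> I \<Longrightarrow> rdist (As i) (Bs i) \<le> r"
  shows "rdist (convex hull (\<Union>i\<in>I. As i)) (convex hull (\<Union>i\<in>I. Bs i)) \<le> r"
proof (rule ereal_le_if_le_real_above)
  fix l assume l: "r < ereal l"
  let ?H = "convex hull (\<Union>i\<in>I. As i)"
  have less: "rdist (As i) (Bs i) < ereal l" if "i \<in> I" for i
    using assms(4)[OF that] l by (rule order.strict_trans1)
  then have "0 \<le> l"
    using assms(1) rdist_less_ereal_imp_pos by (metis ex_in_conv less_imp_le)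
  have "Bs i \<subseteq> scaled_diff (1 + l) ?H l ?H" if "i \<in> I" for i
  proof -
    have "Bs i \<subseteq> scaled_diff (1 + l) (As i) l (As i)"
      by (rule subset_scaled_diff_if_rdist_less[OF assms(2)[OF that] less[OF that]])
    also have "\<dots> \<subseteq> scaled_diff (1 + l) ?H l ?H"
      using that by (intro scaled_diff_mono order.trans[OF _ hull_subset]) auto
    finally show ?thesis .
  qed
  then have "convex hull (\<Union>i\<in>I. Bs i) \<subseteq> scaled_diff (1 + l) ?H l ?H"
    by (intro hull_minimal convex_scaled_diff convex_convex_hull) auto
  moreover have "?H \<subseteq> convex hull (\<Union>i\<in>I. Bs i)"
    using assms(3) by (intro hull_mono) blast
  ultimately show "rdist ?H (convex hull (\<Union>i\<in>I. Bs i)) \<le> ereal l"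
    using \<open>0 \<le> l\<close> by (intro rdist_le_if_subset_scaled_diff)
qed

theorem mainTheorem4:
  fixes A B C :: "'a::euclidean_space set"
  assumes "convex A" "convex B" "convex C" "A \<subseteq> B" "B \<subseteq> C"
  shows "(rdist A B = Inf (ereal ` {l::real. l \<ge> 0 \<and> B \<subseteq> scaled_diff (1 + l) A l A})) \<and>
         (\<forall>\<pi>::'a \<Rightarrow> 'b::euclidean_space. affine_map \<pi> \<longrightarrow>
           rdist (\<pi> ` A) (\<pi> ` B) \<le> rdist A B \<and>
           (DIM('b) = DIM('a) \<and> bij \<pi> \<longrightarrow> rdist (\<pi> ` A) (\<pi> ` B) = rdist A B)) \<and>
         (rdist A C \<le> rdist A B + rdist B C + 2 * rdist A B * rdist B C) \<and>
         (\<forall>(t::nat) (As::nat \<Rightarrow> 'a set) (Bs::nat \<Rightarrow> 'a set). t \<ge> 1 \<longrightarrow>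
           (\<forall>i\<in>{1..t}. convex (As i) \<and> convex (Bs i) \<and> As i \<subseteq> Bs i) \<longrightarrow>
           rdist (convex hull (\<Union>i\<in>{1..t}. As i)) (convex hull (\<Union>i\<in>{1..t}. Bs i))
             \<le> Max ((\<lambda>i. rdist (As i) (Bs i)) ` {1..t}))"
proof (intro conjI allI impI)
  show "rdist A B = Inf (ereal ` {l. 0 \<le> l \<and> B \<subseteq> scaled_diff (1 + l) A l A})"
    by (rule rdist_eq_Inf_scaled_diff[OF assms(1,4)])
  show "rdist A C \<le> rdist A B + rdist B C + 2 * rdist A B * rdist B C"
    by (rule rdist_triangle[OF assms(1,2,4,5)])
  fix \<pi> :: "'a \<Rightarrow> 'b" assume "affine_map \<pi>"
  then show "rdist (\<pi> ` A) (\<pi> ` B) \<le> rdist A B" by (rule rdist_affine_image_le)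
  show "rdist (\<pi> ` A) (\<pi> ` B) = rdist A B" if "DIM('b) = DIM('a) \<and> bij \<pi>"
    using that \<open>affine_map \<pi>\<close> by (intro rdist_affine_image_eq) auto
next
  fix t :: nat and As Bs :: "nat \<Rightarrow> 'a set"
  assume "1 \<le> t" "\<forall>i\<in>{1..t}. convex (As i) \<and> convex (Bs i) \<and> As i \<subseteq> Bs i"
  then show "rdist (convex hull (\<Union>i\<in>{1..t}. As i)) (convex hull (\<Union>i\<in>{1..t}. Bs i))
      \<le> Max ((\<lambda>i. rdist (As i) (Bs i)) ` {1..t})"
    by (intro rdist_convex_hull_UN_le) auto
qed

end
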